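(* Let $\mathcal{H}$ be a family of half-intervals in $\mathbb{R}$ and let $k\ge 0$ be an integer. Then $\mathcal{H}$ contains at most $k+1$ different $k$-cliques.
   Context: A half-interval in $\mathbb{R}$ is either a left-interval $(-\infty,a]$ or a right-interval $[b,\infty)$. A subset $J$ of $k$ half-intervals from $\mathcal{H}$ is a $k$-clique if there is a point $p\in\mathbb{R}$ that lies in all half-intervals of $J$ but in no half-interval of $\mathcal{H}\setminus J$. *)

theory Defs
  imports Main Complex_Main
begin

definition half_interval :: "real set \<Rightarrow> bool" where
  "half_interval S \<longleftrightarrow> (\<exists>a. S = {..a}) \<or> (\<exists>b. S = {b..})"

text \<open>The family H is given as an index set together with an assignment of a
half-interval to each index (so repeated half-intervals are allowed).\<close>
definition k_clique :: "'i set \<Rightarrow> ('i \<Rightarrow> real set) \<Rightarrow> nat \<Rightarrow> 'i set \<Rightarrow> bool" where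
  "k_clique H iv k J \<longleftrightarrow> J \<subseteq> H \<and> finite J \<and> card J = k \<and>
     (\<exists>p::real. (\<forall>j\<in>J. p \<in> iv j) \<and> (\<forall>j\<in>H - J. p \<notin> iv j))"

end

theory Submission
  imports Defs
begin

text \<open>A k-clique is the set of members containing some point p. Moving p to the right can only
  add right-intervals and drop left-intervals, so two k-cliques are comparable in this sense and
  are therefore determined by how many right-intervals they contain, a number in {0..k}.\<close>

definition stabbed :: "'i set \<Rightarrow> ('i \<Rightarrow> real set) \<Rightarrow> real \<Rightarrow> 'i set" where
  "stabbed H iv p = {j \<in> H. p \<in> iv j}"

lemma k_clique_iff_stabbed:
  "k_clique H iv k J \<longleftrightarrow> finite J \<and> card J = k \<and> (\<exists>p. J = stabbed H iv p)"
  unfolding k_clique_def stabbed_def by blast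

definition right_members :: "'i set \<Rightarrow> ('i \<Rightarrow> real set) \<Rightarrow> 'i set" where
  "right_members H iv = {i \<in> H. \<exists>b. iv i = {b..}}"

lemma stabbed_right_members_mono:
  assumes "p \<le> q"
  shows "stabbed H iv p \<inter> right_members H iv \<subseteq> stabbed H iv q \<inter> right_members H iv"
  using assms unfolding stabbed_def right_members_def by auto

lemma stabbed_left_members_antimono:
  assumes "\<forall>i\<in>H. half_interval (iv i)" and "p \<le> q"
  shows "stabbed H iv q - right_members H iv \<subseteq> stabbed H iv p - right_members H iv"
proof
  fix j assume j: "j \<in> stabbed H iv q - right_members H iv"
  then have "j \<in> H" "q \<in> iv j" "\<nexists>b. iv j = {b..}"
    unfolding stabbed_def right_members_def by auto
  with assms(1) obtain a where "iv j = {..a}"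
    unfolding half_interval_def by blast
  with \<open>q \<in> iv j\<close> \<open>p \<le> q\<close> have "p \<in> iv j" by auto
  with j show "j \<in> stabbed H iv p - right_members H iv"
    unfolding stabbed_def by auto
qed

lemma eq_if_split_subset_card_eq:
  assumes "finite A" "finite B" "card A = card B"
    and "A \<inter> R \<subseteq> B \<inter> R" "B - R \<subseteq> A - R" "card (A \<inter> R) = card (B \<inter> R)"
  shows "A = B"
proof -
  have Int_eq: "A \<inter> R = B \<inter> R"
    using card_subset_eq assms(2,4,6) by (metis finite_Int)
  have "card (A - R) = card (B - R)"
    using assms(1-3) Int_eq by (simp add: card_Diff_subset_Int)
  then have "B - R = A - R"
    using card_subset_eq assms(1,5) by (metis finite_Diff)
  with Int_eq show ?thesis by blast
qed

lemma k_cliques_eq_if_card_right_members_eq: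
  assumes "\<forall>i\<in>H. half_interval (iv i)"
    and "k_clique H iv k J1" "k_clique H iv k J2"
    and "card (J1 \<inter> right_members H iv) = card (J2 \<inter> right_members H iv)"
  shows "J1 = J2"
proof -
  have ordered: "J1 = J2"
    if "k_clique H iv k J1" "k_clique H iv k J2"
      and "card (J1 \<inter> right_members H iv) = card (J2 \<inter> right_members H iv)"
      and "J1 = stabbed H iv p" "J2 = stabbed H iv q" "p \<le> q"
    for J1 J2 p q
  proof (rule eq_if_split_subset_card_eq)
    show "finite J1" "finite J2" "card J1 = card J2"
      using that(1,2) by (simp_all add: k_clique_def)
    show "J1 \<inter> right_members H iv \<subseteq> J2 \<inter> right_members H iv"
      unfolding that(4,5) by (rule stabbed_right_members_mono[OF that(6)])
    show "J2 - right_members H iv \<subseteq> J1 - right_members H iv"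
      unfolding that(4,5) by (rule stabbed_left_members_antimono[OF assms(1) that(6)])
  qed (use that(3) in simp)
  from assms(2,3) obtain p q where "J1 = stabbed H iv p" "J2 = stabbed H iv q"
    by (auto simp: k_clique_iff_stabbed)
  then show ?thesis
    using ordered[of J1 J2] ordered[of J2 J1] assms(2-4) by (metis linorder_le_cases)
qed

theorem lemma2:
  fixes H :: "'i set" and iv :: "'i \<Rightarrow> real set" and k :: nat
  assumes "\<forall>i\<in>H. half_interval (iv i)"
  shows "finite {J. k_clique H iv k J} \<and> card {J. k_clique H iv k J} \<le> k + 1"
proof -
  let ?count = "\<lambda>J. card (J \<inter> right_members H iv)"
  have "inj_on ?count {J. k_clique H iv k J}"
    using k_cliques_eq_if_card_right_members_eq[OF assms] by (intro inj_onI) blast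
  moreover have "?count ` {J. k_clique H iv k J} \<subseteq> {0..k}"
    by (auto simp: k_clique_def intro: card_mono)
  ultimately have "finite {J. k_clique H iv k J}" "card {J. k_clique H iv k J} \<le> card {0..k}"
    by (blast intro: inj_on_finite, blast intro: card_inj_on_le)
  then show ?thesis by simp
qed

end
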